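(* Let $\varphi(x)=P(x)/Q(x)$ be a rational function, regular at $x=0$, whose Taylor series at $x=0$ is symplectic. Then there exists a rational function $\rho(y)$ such that $\varphi(x)=\rho\big(x^2/(1-x)\big)$.
   Context: A formal power series $\varphi(x)=\sum_{i\ge0}\gamma_i x^i\in\mathbb{C}[[x]]$ is called symplectic if for every $m\ge1$ one has $\sum_{k=0}^{m-1}(-1)^k\binom{m-1}{k}\gamma_{m+k}=0$. *)

theory Defs
  imports Complex_Main "HOL-Computational_Algebra.Computational_Algebra"
begin

definition symplectic :: "complex fps \<Rightarrow> bool" where
  "symplectic f \<longleftrightarrow>
     (\<forall>m::nat. m \<ge> 1 \<longrightarrow>
        (\<Sum>k<m. (-1)^k * of_nat ((m - 1) choose k) * fps_nth f (m + k)) = 0)"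

end

theory Submission
  imports Defs
begin

text \<open>
  Put \<open>Y = x\<^sup>2 / (1 - x)\<close>. Since \<open>x\<^sup>2 = Y (1 - x)\<close>, every polynomial in \<open>x\<close> can be
  written as \<open>A(Y) + x B(Y)\<close> with polynomials \<open>A, B\<close>. The symplectic conditions say that the
  functionals \<open>L\<^sub>k f = [x\<^bsup>2k+1\<^esup>] (1 - x)\<^sup>k f\<close> all vanish, and since
  \<open>Y (1 - x)\<^bsup>k+1\<^esup> = x\<^sup>2 (1 - x)\<^sup>k\<close> they satisfy \<open>L\<^bsub>k+1\<^esub> (Y f) = L\<^sub>k f\<close> and
  \<open>L\<^sub>0 (Y f) = 0\<close>. Hence symplectic series form a module over \<open>\<complex>[Y]\<close>, and
  \<open>A(Y) + x B(Y)\<close> is symplectic iff \<open>B = 0\<close>. Multiplying \<open>P/Q\<close> by the norm of \<open>Q\<close>, an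
  element of \<open>\<complex>[Y]\<close>, yields \<open>P\<close> times the conjugate of \<open>Q\<close>; its \<open>x\<close>-part must vanish, and
  that is exactly the statement that \<open>P/Q\<close> is a quotient of polynomials in \<open>Y\<close>.
\<close>

definition fps_Y :: "'a::field fps" where
  "fps_Y = fps_X^2 * inverse (1 - fps_X)"

lemma fps_Y_nth_0 [simp]: "fps_Y $ 0 = 0"
  by (simp add: fps_Y_def)

lemma fps_Y_times_one_minus_X: "fps_Y * (1 - fps_X) = fps_X^2"
  by (simp add: fps_Y_def mult.assoc inverse_mult_eq_1)

lemma fps_X_times_X_eq: "fps_X * fps_X = fps_Y - fps_X * fps_Y"
proof -
  have "fps_Y - fps_X * fps_Y = fps_Y * (1 - fps_X)"
    by (simp add: algebra_simps)
  also have "\<dots> = fps_X * fps_X"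
    by (simp add: fps_Y_times_one_minus_X power2_eq_square)
  finally show ?thesis ..
qed

definition compose_Y :: "'a::field poly \<Rightarrow> 'a fps" where
  "compose_Y A = fps_of_poly A oo fps_Y"

lemma compose_Y_0 [simp]: "compose_Y 0 = 0"
  by (simp add: compose_Y_def fps_eq_iff fps_compose_nth)

lemma compose_Y_add: "compose_Y (A + B) = compose_Y A + compose_Y B"
  by (simp add: compose_Y_def fps_of_poly_add fps_compose_add_distrib)

lemma compose_Y_diff: "compose_Y (A - B) = compose_Y A - compose_Y B"
  by (simp add: compose_Y_def fps_of_poly_diff fps_compose_sub_distrib)

lemma compose_Y_mult: "compose_Y (A * B) = compose_Y A * compose_Y B"
  by (simp add: compose_Y_def fps_of_poly_mult fps_compose_mult_distrib)

lemma compose_Y_pCons: "compose_Y (pCons c A) = fps_const c + fps_Y * compose_Y A"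
  by (simp add: compose_Y_def fps_of_poly_pCons fps_compose_add_distrib
      fps_compose_mult_distrib mult.commute)

definition split_fps :: "'a::field poly \<Rightarrow> 'a poly \<Rightarrow> 'a fps" where
  "split_fps A B = compose_Y A + fps_X * compose_Y B"

lemma mult_quadratic_ext:
  fixes x y :: "'a::comm_ring"
  assumes "x * x = y - x * y"
  shows "(a1 + x * b1) * (a2 + x * b2) =
           (a1 * a2 + y * (b1 * b2)) + x * (a1 * b2 + b1 * a2 - y * (b1 * b2))"
proof -
  have "(a1 + x * b1) * (a2 + x * b2) = a1 * a2 + x * (a1 * b2 + b1 * a2) + (x * x) * (b1 * b2)"
    by (simp add: algebra_simps)
  then show ?thesis
    by (simp add: assms algebra_simps)
qed

lemma split_fps_mult:
  "split_fps A1 B1 * split_fps A2 B2 =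
     split_fps (A1 * A2 + [:0, 1:] * (B1 * B2)) (A1 * B2 + B1 * A2 - [:0, 1:] * (B1 * B2))"
  unfolding split_fps_def mult_quadratic_ext[OF fps_X_times_X_eq]
  by (simp add: compose_Y_add compose_Y_diff compose_Y_mult compose_Y_pCons)

lemma fps_of_poly_eq_split_fps:
  fixes F :: "'a::field poly"
  shows "\<exists>A B. fps_of_poly F = split_fps A B \<and>
     (\<forall>x. x \<noteq> 1 \<longrightarrow> poly F x = poly A (x^2 / (1 - x)) + x * poly B (x^2 / (1 - x)))"
proof (induction F rule: pCons_induct)
  case 0
  show ?case
    by (rule exI[of _ 0], rule exI[of _ 0]) (simp add: split_fps_def)
next
  case (pCons c F)
  then obtain A B where fps: "fps_of_poly F = split_fps A B"
    and val: "\<forall>x. x \<noteq> 1 \<longrightarrow> poly F x = poly A (x^2 / (1 - x)) + x * poly B (x^2 / (1 - x))"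
    by blast
  have step: "c + x * (a + x * b) = (c + y * b) + x * (a - y * b)"
    if "x * x = y - x * y" for x y a b c :: "'b::comm_ring"
  proof -
    have "c + x * (a + x * b) = c + x * a + (x * x) * b"
      by (simp add: algebra_simps)
    then show ?thesis
      by (simp add: that algebra_simps)
  qed
  show ?case
  proof (intro exI conjI allI impI)
    show "fps_of_poly (pCons c F) = split_fps (pCons c B) (A - pCons 0 B)"
      using step[OF fps_X_times_X_eq, of "fps_const c" "compose_Y A" "compose_Y B"]
      by (simp add: fps_of_poly_pCons fps split_fps_def compose_Y_pCons compose_Y_diff mult.commute)
  next
    fix x :: 'a
    assume "x \<noteq> 1"
    then have "x * x = x^2 / (1 - x) * (1 - x)"
      by (simp add: power2_eq_square)
    also have "\<dots> = x^2 / (1 - x) - x * (x^2 / (1 - x))"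
      by (metis mult.commute mult.right_neutral right_diff_distrib)
    finally have "x * x = x^2 / (1 - x) - x * (x^2 / (1 - x))" .
    from step[OF this] val \<open>x \<noteq> 1\<close>
    show "poly (pCons c F) x = poly (pCons c B) (x^2 / (1 - x)) + x * poly (A - pCons 0 B) (x^2 / (1 - x))"
      by simp
  qed
qed

lemma one_minus_X_power_nth:
  "((1 - fps_X) ^ k :: 'a::comm_ring_1 fps) $ i = (-1) ^ i * of_nat (k choose i)"
proof (induction k arbitrary: i)
  case 0
  then show ?case by (cases i) auto
next
  case (Suc k)
  have "(1 - fps_X) ^ Suc k = (1 - fps_X) ^ k - fps_X * ((1 - fps_X) ^ k :: 'a fps)"
    by (simp add: left_diff_distrib)
  with Suc.IH show ?case
    by (cases i) (simp_all add: algebra_simps)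
qed

definition sympl_functional :: "nat \<Rightarrow> 'a::comm_ring_1 fps \<Rightarrow> 'a" where
  "sympl_functional k f = (f * (1 - fps_X) ^ k) $ (2 * k + 1)"

lemma sympl_functional_add:
  "sympl_functional k (f + g) = sympl_functional k f + sympl_functional k g"
  by (simp add: sympl_functional_def distrib_right)

lemma sympl_functional_const_mult:
  "sympl_functional k (fps_const c * f) = c * sympl_functional k f"
  by (simp add: sympl_functional_def mult.assoc)

lemma sympl_functional_1: "sympl_functional k 1 = 0"
  by (simp add: sympl_functional_def one_minus_X_power_nth binomial_eq_0)

lemma sympl_functional_X: "sympl_functional k fps_X = (if k = 0 then 1 else 0)"
  by (simp add: sympl_functional_def one_minus_X_power_nth binomial_eq_0)

lemma sympl_functional_Y_mult_0: "sympl_functional 0 (fps_Y * f) = 0"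
  by (simp add: sympl_functional_def fps_Y_def mult.assoc fps_X_power_mult_nth)

lemma sympl_functional_Y_mult_Suc:
  "sympl_functional (Suc k) (fps_Y * f) = sympl_functional k f"
proof -
  have "fps_Y * f * (1 - fps_X) ^ Suc k = (fps_Y * (1 - fps_X)) * (f * (1 - fps_X) ^ k)"
    by (simp only: power_Suc mult_ac)
  also have "\<dots> = fps_X ^ 2 * (f * (1 - fps_X) ^ k)"
    by (simp only: fps_Y_times_one_minus_X)
  finally have e: "fps_Y * f * (1 - fps_X) ^ Suc k = fps_X ^ 2 * (f * (1 - fps_X) ^ k)" .
  show ?thesis
    unfolding sympl_functional_def e by (simp add: fps_X_power_mult_nth)
qed

lemma sympl_functional_compose_Y_mult:
  assumes "\<And>k. sympl_functional k f = 0"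
  shows "sympl_functional k (compose_Y A * f) = 0"
proof (induction A arbitrary: k rule: pCons_induct)
  case 0
  then show ?case by (simp add: sympl_functional_def)
next
  case (pCons c A)
  have "compose_Y (pCons c A) * f = fps_const c * f + fps_Y * (compose_Y A * f)"
    by (simp add: compose_Y_pCons algebra_simps)
  with assms pCons.IH show ?case
    by (cases k) (simp_all add: sympl_functional_add sympl_functional_const_mult
        sympl_functional_Y_mult_0 sympl_functional_Y_mult_Suc)
qed

lemma sympl_functional_X_mult_compose_Y:
  "sympl_functional k (fps_X * compose_Y B) = coeff B k"
proof (induction B arbitrary: k rule: pCons_induct)
  case 0
  then show ?case by (simp add: sympl_functional_def)
next
  case (pCons c B)
  have "fps_X * compose_Y (pCons c B) = fps_const c * fps_X + fps_Y * (fps_X * compose_Y B)"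
    by (simp add: compose_Y_pCons algebra_simps)
  with pCons.IH show ?case
    by (cases k) (simp_all add: sympl_functional_add sympl_functional_const_mult
        sympl_functional_Y_mult_0 sympl_functional_Y_mult_Suc sympl_functional_X)
qed

lemma sympl_functional_split_fps: "sympl_functional k (split_fps A B) = coeff B k"
  using sympl_functional_compose_Y_mult[of 1 k A]
  by (simp add: split_fps_def sympl_functional_add sympl_functional_1
      sympl_functional_X_mult_compose_Y)

lemma sympl_functional_eq_symplectic_sum:
  fixes f :: "'a::comm_ring_1 fps"
  shows "sympl_functional k f =
           (-1) ^ k * (\<Sum>i<Suc k. (-1) ^ i * of_nat (k choose i) * f $ (Suc k + i))"
proof -
  have "sympl_functional k f = (\<Sum>i=0..2*k+1. ((1 - fps_X) ^ k) $ i * f $ (2*k+1 - i))"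
    by (simp add: sympl_functional_def fps_mult_nth mult.commute[of f])
  also have "\<dots> = (\<Sum>i=0..k. ((1 - fps_X) ^ k) $ i * f $ (2*k+1 - i))"
    by (rule sum.mono_neutral_right) (auto simp: one_minus_X_power_nth binomial_eq_0)
  also have "\<dots> = (\<Sum>i=0..k. ((1 - fps_X) ^ k) $ (k - i) * f $ (Suc k + i))"
    by (rule sum.reindex_bij_witness[of _ "\<lambda>i. k - i" "\<lambda>i. k - i"])
      (auto simp: Suc_diff_le simp flip: mult_2)
  also have "\<dots> = (\<Sum>i=0..k. (-1) ^ k * ((-1) ^ i * of_nat (k choose i) * f $ (Suc k + i)))"
  proof (intro sum.cong refl)
    fix i
    assume "i \<in> {0..k}"
    then have "(-1 :: 'a) ^ (k - i) = (-1) ^ k * (-1) ^ i"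
      by (simp flip: neg_one_power_add_eq_neg_one_power_diff add: power_add)
    moreover have "k choose (k - i) = k choose i"
      using \<open>i \<in> {0..k}\<close> by (simp add: binomial_symmetric[symmetric])
    ultimately have "((1 - fps_X) ^ k :: 'a fps) $ (k - i) =
        (-1) ^ k * ((-1) ^ i * of_nat (k choose i))"
      by (simp add: one_minus_X_power_nth)
    then show "((1 - fps_X) ^ k) $ (k - i) * f $ (Suc k + i) =
        (-1) ^ k * ((-1) ^ i * of_nat (k choose i) * f $ (Suc k + i))"
      by (simp only: mult.assoc)
  qed
  finally show ?thesis
    by (simp add: sum_distrib_left atLeast0AtMost lessThan_Suc_atMost)
qed

lemma symplectic_iff_sympl_functional:
  "symplectic f \<longleftrightarrow> (\<forall>k. sympl_functional k f = 0)"
proof -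
  have shift: "(\<forall>m::nat. m \<ge> 1 \<longrightarrow> R m) \<longleftrightarrow> (\<forall>k. R (Suc k))" for R
    by (metis One_nat_def Suc_le_D Suc_le_mono zero_le)
  show ?thesis
    unfolding symplectic_def shift by (simp add: sympl_functional_eq_symplectic_sum)
qed

lemma symplectic_compose_Y_mult: "symplectic f \<Longrightarrow> symplectic (compose_Y A * f)"
  by (simp add: symplectic_iff_sympl_functional sympl_functional_compose_Y_mult)

lemma symplectic_split_fps_iff: "symplectic (split_fps A B) \<longleftrightarrow> B = 0"
  by (simp add: symplectic_iff_sympl_functional sympl_functional_split_fps poly_eq_iff)

lemma symplectic_quotient_split:
  assumes Q0: "fps_of_poly Q $ 0 \<noteq> 0"
    and sympl: "symplectic (fps_of_poly P / fps_of_poly Q)"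
    and P: "fps_of_poly P = split_fps A B"
    and Q: "fps_of_poly Q = split_fps C D"
  shows "B * C = A * D"
proof -
  define Y :: "complex poly" where "Y = [:0, 1:]"
  note mult = split_fps_mult[where 'a = complex, folded Y_def]
  \<comment> \<open>\<open>x\<close> and \<open>-Y - x\<close> are the two roots of \<open>t\<^sup>2 + Y t - Y\<close>, so \<open>Q\<close> times its
     conjugate lies in \<open>\<complex>[Y]\<close>.\<close>
  define conj where "conj = split_fps (C - Y * D) (- D)"
  define norm where "norm = C * C - Y * (C * D + D * D)"
  have "fps_of_poly Q * conj = split_fps norm 0"
    unfolding Q conj_def norm_def mult by (simp add: algebra_simps)
  then have norm: "fps_of_poly Q * conj = compose_Y norm"
    by (simp add: split_fps_def)
  have "compose_Y norm * (fps_of_poly P / fps_of_poly Q) =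
      (fps_of_poly P / fps_of_poly Q * fps_of_poly Q) * conj"
    by (simp add: norm flip: mult.assoc)
  also have "\<dots> = fps_of_poly P * conj"
    using Q0 by (simp add: fps_divide_unit mult.assoc inverse_mult_eq_1)
  also have "\<dots> = split_fps (A * C - Y * (A * D + B * D)) (B * C - A * D)"
    unfolding P conj_def mult by (simp add: algebra_simps)
  finally show ?thesis
    using symplectic_compose_Y_mult[OF sympl, of norm]
    by (simp add: symplectic_split_fps_iff)
qed

lemma divide_add_mult_eq_divide:
  fixes a b c d x :: "'a::field"
  assumes "b * c = a * d" and "c \<noteq> 0" and "c + x * d \<noteq> 0"
  shows "(a + x * b) / (c + x * d) = a / c"
proof -
  have "(a + x * b) * c = a * (c + x * d)"
    using assms(1) by (simp add: algebra_simps)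
  with assms(2,3) show ?thesis
    by (simp add: frac_eq_eq)
qed

theorem lemma3p1:
  fixes P Q :: "complex poly"
  assumes "poly Q 0 \<noteq> 0"
    and "symplectic (fps_of_poly P / fps_of_poly Q)"
  shows "\<exists>R S :: complex poly. S \<noteq> 0 \<and>
           (\<forall>x::complex. x \<noteq> 1 \<and> poly Q x \<noteq> 0 \<and> poly S (x^2 / (1 - x)) \<noteq> 0 \<longrightarrow>
              poly P x / poly Q x = poly R (x^2 / (1 - x)) / poly S (x^2 / (1 - x)))"
proof -
  obtain A B where P: "fps_of_poly P = split_fps A B"
    and P_val: "\<forall>x. x \<noteq> 1 \<longrightarrow> poly P x = poly A (x^2 / (1 - x)) + x * poly B (x^2 / (1 - x))"
    using fps_of_poly_eq_split_fps by blast
  obtain C D where Q: "fps_of_poly Q = split_fps C D"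
    and Q_val: "\<forall>x. x \<noteq> 1 \<longrightarrow> poly Q x = poly C (x^2 / (1 - x)) + x * poly D (x^2 / (1 - x))"
    using fps_of_poly_eq_split_fps by blast
  have BC: "B * C = A * D"
    using symplectic_quotient_split[OF _ assms(2) P Q] assms(1) by (simp add: poly_0_coeff_0)
  have "C \<noteq> 0"
    using Q_val assms(1) by auto
  moreover have "poly P x / poly Q x = poly A (x^2 / (1 - x)) / poly C (x^2 / (1 - x))"
    if "x \<noteq> 1" "poly Q x \<noteq> 0" "poly C (x^2 / (1 - x)) \<noteq> 0" for x
    using that P_val Q_val divide_add_mult_eq_divide[of "poly B (x^2 / (1 - x))" "poly C (x^2 / (1 - x))"]
    by (simp add: BC flip: poly_mult)
  ultimately show ?thesis
    by blast
qed

end
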